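(* Let $\alpha\ge4$ and let $N'$, $M_l$, $C_j$ be as produced by the clustering procedure. Let $l\in N'$ and $j\in N$. (1) For every $j_b\in M_l$, $c_{lj}\le 2c_{j_bj}+2\alpha C_j$. (2) For all $j_a,j_b\in M_l$ with $c_{lj_a}\le c_{lj_b}$, $c_{j_aj}\le 3c_{j_bj}+4\alpha C_j$.
   Context: Setting: finite set $N$ of locations, capacity $M>0$, demands $d_j\ge0$, integer $k\ge1$, metric costs $c_{ij}$ on $N$ (nonnegative, $c_{ii}=0$, symmetric, triangle inequality). $(x,y)$ is an optimal solution of the LP-relaxation: minimize $\sum_{i,j}d_jc_{ij}x_{ij}$ s.t. $\sum_{i}x_{ij}=1$ ($j\in N$), $\sum_j d_jx_{ij}\le My_i$ ($i\in N$), $\sum_i y_i\le k$, $0\le x_{ij}\le y_i$, $0\le y_i\le1$. For $j\in N$ let $C_j=\sum_{i\in N}c_{ij}x_{ij}$. Clustering procedure: order the locations as $1,\dots,n$ so that $C_1\le\dots\le C_n$ (ties arbitrary); start with $N'=\emptyset$; for $j=1,\dots,n$ in turn, if there is no $l\in N'$ with $c_{lj}\le 2\alpha C_j$, add $j$ to $N'$. Then for each $j\in N$ let $N'(j)$ be a closest element of $N'$ to $j$ (ties arbitrary), and set $M_l=\{j\in N: N'(j)=l\}$ for $l\in N'$. *)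

theory Defs
  imports Complex_Main
begin

definition metric_on :: "'a set \<Rightarrow> ('a \<Rightarrow> 'a \<Rightarrow> real) \<Rightarrow> bool" where
  "metric_on N c \<longleftrightarrow>
     (\<forall>i\<in>N. \<forall>j\<in>N. c i j \<ge> 0) \<and> (\<forall>i\<in>N. c i i = 0) \<and>
     (\<forall>i\<in>N. \<forall>j\<in>N. c i j = c j i) \<and>
     (\<forall>i\<in>N. \<forall>j\<in>N. \<forall>l\<in>N. c i l \<le> c i j + c j l)"

text \<open>Feasibility for the LP relaxation; x i j is the fraction of j's demand served by i.\<close>
definition lp_feasible ::
  "'a set \<Rightarrow> real \<Rightarrow> ('a \<Rightarrow> real) \<Rightarrow> nat \<Rightarrow> ('a \<Rightarrow> 'a \<Rightarrow> real) \<Rightarrow> ('a \<Rightarrow> real) \<Rightarrow> bool" where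
  "lp_feasible N M d k x y \<longleftrightarrow>
     (\<forall>j\<in>N. (\<Sum>i\<in>N. x i j) = 1) \<and>
     (\<forall>i\<in>N. (\<Sum>j\<in>N. d j * x i j) \<le> M * y i) \<and>
     (\<Sum>i\<in>N. y i) \<le> real k \<and>
     (\<forall>i\<in>N. \<forall>j\<in>N. 0 \<le> x i j \<and> x i j \<le> y i) \<and>
     (\<forall>i\<in>N. 0 \<le> y i \<and> y i \<le> 1)"

definition lp_cost ::
  "'a set \<Rightarrow> ('a \<Rightarrow> real) \<Rightarrow> ('a \<Rightarrow> 'a \<Rightarrow> real) \<Rightarrow> ('a \<Rightarrow> 'a \<Rightarrow> real) \<Rightarrow> real" where
  "lp_cost N d c x = (\<Sum>i\<in>N. \<Sum>j\<in>N. d j * c i j * x i j)"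

definition lp_optimal ::
  "'a set \<Rightarrow> real \<Rightarrow> ('a \<Rightarrow> real) \<Rightarrow> nat \<Rightarrow> ('a \<Rightarrow> 'a \<Rightarrow> real) \<Rightarrow>
   ('a \<Rightarrow> 'a \<Rightarrow> real) \<Rightarrow> ('a \<Rightarrow> real) \<Rightarrow> bool" where
  "lp_optimal N M d k c x y \<longleftrightarrow> lp_feasible N M d k x y \<and>
     (\<forall>x' y'. lp_feasible N M d k x' y' \<longrightarrow> lp_cost N d c x \<le> lp_cost N d c x')"

definition Cval :: "'a set \<Rightarrow> ('a \<Rightarrow> 'a \<Rightarrow> real) \<Rightarrow> ('a \<Rightarrow> 'a \<Rightarrow> real) \<Rightarrow> 'a \<Rightarrow> real" where
  "Cval N c x j = (\<Sum>i\<in>N. c i j * x i j)"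

fun greedy :: "('a \<Rightarrow> 'a \<Rightarrow> real) \<Rightarrow> real \<Rightarrow> ('a \<Rightarrow> real) \<Rightarrow> 'a set \<Rightarrow> 'a list \<Rightarrow> 'a set" where
  "greedy c \<alpha> C acc [] = acc"
| "greedy c \<alpha> C acc (j # js) =
     greedy c \<alpha> C (if (\<exists>l\<in>acc. c l j \<le> 2 * \<alpha> * C j) then acc else insert j acc) js"

definition cluster_centers :: "('a \<Rightarrow> 'a \<Rightarrow> real) \<Rightarrow> real \<Rightarrow> ('a \<Rightarrow> real) \<Rightarrow> 'a list \<Rightarrow> 'a set" where
  "cluster_centers c \<alpha> C ord = greedy c \<alpha> C {} ord"

end

theory Submission
  imports Defs
begin

(* The greedy clustering has one property that matters: every
   location j is within distance 2 alpha C_j of some cluster centre (either j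
   itself became a centre, or it was skipped because a centre was that close).
   Hence its nearest centre near j satisfies c (near j) j <= 2 alpha C_j =: D j.
   Both claims then follow from the triangle inequality alone, for any metric,
   any set of centres and any radius function D:
     for jb assigned to l:  c l jb <= c (near j) jb <= D j + c jb j,
   giving (1) c l j <= c l jb + c jb j <= 2 c jb j + D j and
         (2) c ja j <= c l ja + c l j <= c l jb + c l j <= 3 c jb j + 2 D j. *)

lemma greedy_mono: "acc \<subseteq> greedy c a C acc js"
proof (induction js arbitrary: acc)
  case (Cons j js)
  then show ?case by (simp, meson subset_insertI subset_trans)
qed simp

lemma greedy_subset: "greedy c a C acc js \<subseteq> acc \<union> set js"
  by (induction js arbitrary: acc) (auto 4 3 dest: subsetD)

lemma greedy_covers:
  assumes "j \<in> set js"
  shows "j \<in> greedy c a C acc js \<or> (\<exists>l\<in>greedy c a C acc js. c l j \<le> 2 * a * C j)"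
  using assms
proof (induction js arbitrary: acc)
  case (Cons j' js)
  show ?case
  proof (cases "j = j'")
    case True
    then show ?thesis
      using greedy_mono[of acc c a C js] greedy_mono[of "insert j acc" c a C js] by auto
  next
    case False
    then show ?thesis using Cons by auto
  qed
qed simp

lemma cluster_centers_subset: "set ord = N \<Longrightarrow> cluster_centers c a C ord \<subseteq> N"
  using greedy_subset[of c a C "{}" ord] by (simp add: cluster_centers_def)

lemma cluster_centers_cover:
  assumes "set ord = N" and "j \<in> N"
  shows "j \<in> cluster_centers c a C ord \<or> (\<exists>l\<in>cluster_centers c a C ord. c l j \<le> 2 * a * C j)"
  using greedy_covers[of j ord c a C "{}"] assms by (simp add: cluster_centers_def)

lemma nearest_center_close:
  assumes "metric_on N c" and "j \<in> N" and "0 \<le> D j"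
    and "j \<in> S \<or> (\<exists>l\<in>S. c l j \<le> D j)"
    and "\<forall>l'\<in>S. c (near j) j \<le> c l' j"
  shows "c (near j) j \<le> D j"
  using assms unfolding metric_on_def by force

lemma nearest_center_bounds:
  assumes metric: "metric_on N c" and "S \<subseteq> N"
    and nearest: "\<forall>j\<in>N. near j \<in> S \<and> (\<forall>l'\<in>S. c (near j) j \<le> c l' j)"
    and close: "c (near j) j \<le> D j"
    and "l \<in> S" and "j \<in> N"
  shows "\<forall>jb\<in>{j'\<in>N. near j' = l}. c l j \<le> 2 * c jb j + D j"
    and "\<forall>ja\<in>{j'\<in>N. near j' = l}. \<forall>jb\<in>{j'\<in>N. near j' = l}.
           c l ja \<le> c l jb \<longrightarrow> c ja j \<le> 3 * c jb j + 2 * D j"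
proof -
  have sym: "\<And>a b. a \<in> N \<Longrightarrow> b \<in> N \<Longrightarrow> c a b = c b a"
   and tri: "\<And>a b e. a \<in> N \<Longrightarrow> b \<in> N \<Longrightarrow> e \<in> N \<Longrightarrow> c a e \<le> c a b + c b e"
    using metric unfolding metric_on_def by auto
  have lN: "l \<in> N" and nearN: "near j \<in> N" using assms nearest by auto
  text \<open>A point assigned to l is at least as close to l as to j's centre.\<close>
  have assigned: "c l jb \<le> c jb j + D j" if "jb \<in> N" "near jb = l" for jb
  proof -
    have "c l jb \<le> c (near j) jb" using nearest that \<open>j \<in> N\<close> by auto
    also have "\<dots> \<le> c (near j) j + c j jb" using tri nearN \<open>j \<in> N\<close> that(1) by blast
    also have "\<dots> \<le> D j + c jb j" using close sym \<open>j \<in> N\<close> that(1) by auto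
    finally show ?thesis by simp
  qed
  have part1: "c l j \<le> 2 * c jb j + D j" if "jb \<in> N" "near jb = l" for jb
    using tri[OF lN that(1) \<open>j \<in> N\<close>] assigned[OF that] by simp
  show "\<forall>jb\<in>{j'\<in>N. near j' = l}. c l j \<le> 2 * c jb j + D j"
    using part1 by auto
  show "\<forall>ja\<in>{j'\<in>N. near j' = l}. \<forall>jb\<in>{j'\<in>N. near j' = l}.
          c l ja \<le> c l jb \<longrightarrow> c ja j \<le> 3 * c jb j + 2 * D j"
  proof (intro ballI impI)
    fix ja jb assume ja: "ja \<in> {j'\<in>N. near j' = l}" and jb: "jb \<in> {j'\<in>N. near j' = l}"
      and closer: "c l ja \<le> c l jb"
    have "c ja j \<le> c l ja + c l j" using tri[of ja l j] sym[of ja l] lN ja \<open>j \<in> N\<close> by auto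
    then show "c ja j \<le> 3 * c jb j + 2 * D j"
      using closer assigned[of jb] part1[of jb] jb by auto
  qed
qed

lemma Cval_nonneg:
  assumes "metric_on N c" and "lp_feasible N M d k x y" and "j \<in> N"
  shows "0 \<le> Cval N c x j"
  using assms unfolding Cval_def metric_on_def lp_feasible_def
  by (intro sum_nonneg mult_nonneg_nonneg) auto

theorem lemma4:
  fixes N :: "'a set" and M :: real and d :: "'a \<Rightarrow> real" and k :: nat
    and c :: "'a \<Rightarrow> 'a \<Rightarrow> real" and x :: "'a \<Rightarrow> 'a \<Rightarrow> real" and y :: "'a \<Rightarrow> real"
    and \<alpha> :: real and ord :: "'a list" and near :: "'a \<Rightarrow> 'a" and l j :: 'a
  assumes "finite N" and "M > 0" and "\<forall>j\<in>N. d j \<ge> 0" and "k \<ge> 1"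
    and "metric_on N c"
    and "lp_optimal N M d k c x y"
    and "\<alpha> \<ge> 4"
    and "distinct ord" and "set ord = N" and "sorted (map (Cval N c x) ord)"
    and "\<forall>j\<in>N. near j \<in> cluster_centers c \<alpha> (Cval N c x) ord \<and>
           (\<forall>l'\<in>cluster_centers c \<alpha> (Cval N c x) ord. c (near j) j \<le> c l' j)"
    and "l \<in> cluster_centers c \<alpha> (Cval N c x) ord" and "j \<in> N"
  shows "(\<forall>jb\<in>{j'\<in>N. near j' = l}. c l j \<le> 2 * c jb j + 2 * \<alpha> * Cval N c x j) \<and>
         (\<forall>ja\<in>{j'\<in>N. near j' = l}. \<forall>jb\<in>{j'\<in>N. near j' = l}.
            c l ja \<le> c l jb \<longrightarrow> c ja j \<le> 3 * c jb j + 4 * \<alpha> * Cval N c x j)"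
proof -
  let ?S = "cluster_centers c \<alpha> (Cval N c x) ord"
  let ?D = "\<lambda>j. 2 * \<alpha> * Cval N c x j"
  have "0 \<le> Cval N c x j"
    using Cval_nonneg[OF assms(5), of M d k x y j] assms(6,13) by (simp add: lp_optimal_def)
  then have "0 \<le> ?D j" using assms(7) by simp
  moreover have "\<forall>l'\<in>?S. c (near j) j \<le> c l' j" using assms(11,13) by blast
  ultimately have close: "c (near j) j \<le> ?D j"
    using nearest_center_close[OF assms(5,13), of ?D ?S near]
      cluster_centers_cover[OF assms(9,13), of c \<alpha> "Cval N c x"] by blast
  note bounds = nearest_center_bounds[where D = ?D, OF assms(5)
                  cluster_centers_subset[OF assms(9)] assms(11) close assms(12,13)]
  have "2 * ?D j = 4 * \<alpha> * Cval N c x j" by simp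
  then show ?thesis using bounds by presburger
qed

end
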